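(* Fix a master $m$ and workers $n=1,\dots,N$ with parameters $L_m>0$, $u_{m,n}>0$, $a_{m,n}>0$. For a variable ${\boldsymbol{w}}=(l,k,t)$ with $l>0$ and parameter $u>0$ define $$g^{+}({\boldsymbol{w}})=\tfrac12(k^2+l^2),\quad g^{-}({\boldsymbol{w}})=\tfrac12(k+l)^2,\quad h^{+}({\boldsymbol{w}})=\tfrac12\left(k+le^{-\frac{ut}{l}}\right)^2,\quad h^{-}({\boldsymbol{w}})=\tfrac12\left(k^2+l^2e^{-\frac{2ut}{l}}\right),$$ and for points ${\boldsymbol{w}},{\boldsymbol{z}}$ $$\tilde g({\boldsymbol{w}},{\boldsymbol{z}})=g^{+}({\boldsymbol{w}})-g^{-}({\boldsymbol{z}})-\nabla g^{-}({\boldsymbol{z}})^T({\boldsymbol{w}}-{\boldsymbol{z}}),\qquad \tilde h({\boldsymbol{w}},{\boldsymbol{z}})=h^{+}({\boldsymbol{w}})-h^{-}({\boldsymbol{z}})-\nabla h^{-}({\boldsymbol{z}})^T({\boldsymbol{w}}-{\boldsymbol{z}}).$$ Write $\tilde g_{m,n},\tilde h_{m,n}$ for these with $u=u_{m,n}$ and ${\boldsymbol{w}}_{m,n}=(l_{m,n},k_{m,n},t)$, ${\boldsymbol{z}}_{m,n}$ a point of the same form; let ${\boldsymbol{w}}_m=({\boldsymbol{w}}_{m,1},\dots,{\boldsymbol{w}}_{m,N})$, ${\boldsymbol{z}}_m=({\boldsymbol{z}}_{m,1},\dots,{\boldsymbol{z}}_{m,N})$ (sharing the common coordinate $t$). Let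 $$\mathbb{E}[X_m(t)]=\sum_{n=1}^N k_{m,n}l_{m,n}\left(1-e^{-\frac{u_{m,n}}{l_{m,n}}(t-a_{m,n}l_{m,n})}\right).$$ Then for all such ${\boldsymbol{w}}_m,{\boldsymbol{z}}_m$, $$L_m-\mathbb{E}[X_m(t)]\le L_m+\sum_{n=1}^N\left[\tilde g_{m,n}({\boldsymbol{w}}_{m,n},{\boldsymbol{z}}_{m,n})+e^{u_{m,n}a_{m,n}}\tilde h_{m,n}({\boldsymbol{w}}_{m,n},{\boldsymbol{z}}_{m,n})\right]=:\tilde q_m({\boldsymbol{w}}_m,{\boldsymbol{z}}_m),$$ and $\tilde q_m(\cdot,{\boldsymbol{z}}_m)$ is a convex function of ${\boldsymbol{w}}_m$.
   Context: Setting: probabilistic worker assignment in a coded distributed computing system, where worker $n$ serves master $m$ with probability $k_{m,n}\in[0,1]$ and is allocated $l_{m,n}>0$ coded rows; $\mathbb{E}[X_m(t)]$ is the (simplified) expected number of results master $m$ has received by time $t$. Gradients $\nabla$ are with respect to ${\boldsymbol{w}}=(l,k,t)$. *)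

theory Defs
  imports "HOL-Analysis.Analysis"
begin

definition g_plus :: "real \<times> real \<times> real \<Rightarrow> real" where
  "g_plus w = (case w of (l, k, t) \<Rightarrow> (k^2 + l^2) / 2)"

definition g_minus :: "real \<times> real \<times> real \<Rightarrow> real" where
  "g_minus w = (case w of (l, k, t) \<Rightarrow> (k + l)^2 / 2)"

definition h_plus :: "real \<Rightarrow> real \<times> real \<times> real \<Rightarrow> real" where
  "h_plus u w = (case w of (l, k, t) \<Rightarrow> (k + l * exp (- (u * t / l)))^2 / 2)"

definition h_minus :: "real \<Rightarrow> real \<times> real \<times> real \<Rightarrow> real" where
  "h_minus u w = (case w of (l, k, t) \<Rightarrow> (k^2 + l^2 * exp (- (2 * u * t / l))) / 2)"

definition g_tilde :: "real \<times> real \<times> real \<Rightarrow> real \<times> real \<times> real \<Rightarrow> real" where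
  "g_tilde w z = g_plus w - g_minus z - frechet_derivative g_minus (at z) (w - z)"

definition h_tilde :: "real \<Rightarrow> real \<times> real \<times> real \<Rightarrow> real \<times> real \<times> real \<Rightarrow> real" where
  "h_tilde u w z = h_plus u w - h_minus u z - frechet_derivative (h_minus u) (at z) (w - z)"

text \<open>Workers are indexed by a finite type 'n (N = CARD('n)); the variable of master m is
  w_m = (l, k, t) with l, k :: real^'n and the shared coordinate t.\<close>

definition expected_X :: "real^'n \<Rightarrow> real^'n \<Rightarrow> real^'n \<Rightarrow> real^'n \<Rightarrow> real \<Rightarrow> real" where
  "expected_X u a l k t =
     (\<Sum>n\<in>UNIV. k$n * l$n * (1 - exp (- (u$n / l$n) * (t - a$n * l$n))))"

definition q_tilde :: "real \<Rightarrow> real^'n \<Rightarrow> real^'n \<Rightarrow>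
    (real^'n) \<times> (real^'n) \<times> real \<Rightarrow> (real^'n) \<times> (real^'n) \<times> real \<Rightarrow> real" where
  "q_tilde L u a w z = (case w of (l, k, t) \<Rightarrow> case z of (l', k', t') \<Rightarrow>
     L + (\<Sum>n\<in>UNIV. g_tilde (l$n, k$n, t) (l'$n, k'$n, t')
                   + exp (u$n * a$n) * h_tilde (u$n) (l$n, k$n, t) (l'$n, k'$n, t')))"

definition admissible :: "((real^'n) \<times> (real^'n) \<times> real) set" where
  "admissible = {(l, k, t). \<forall>n. l$n > 0 \<and> 0 \<le> k$n \<and> k$n \<le> 1}"

end

theory Submission
  imports Defs
begin

text \<open>Both g_minus and h_minus are convex: g_minus is the square of a linear form, and h_minus
  involves the square of the positive function l e^{-ut/l}, which is convex as the perspective of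
  s \<mapsto> e^{-us}. Their tangent
  planes therefore lie below them, so g_tilde(w, z) \<ge> g_plus(w) - g_minus(w) = -kl and
  h_tilde(w, z) \<ge> h_plus(w) - h_minus(w) = kl e^{-ut/l}; weighting the latter by e^{ua} and
  summing over the workers gives the lower bound. For convexity in w, g_plus is convex, h_plus is
  half the square of the nonnegative convex function k + l e^{-ut/l}, and the tangent-plane terms
  are affine in w.\<close>

lemma convex_on_compose_linear:
  assumes "linear g" "convex_on T f" "g ` S \<subseteq> T" "convex S"
  shows "convex_on S (\<lambda>x. f (g x))"
  unfolding convex_on_def
proof (intro conjI ballI allI impI)
  fix x y and a b :: real
  assume "x \<in> S" "y \<in> S" and ab: "0 \<le> a" "0 \<le> b" "a + b = 1"
  then have "g x \<in> T" "g y \<in> T" using assms(3) by auto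
  then have "f (a *\<^sub>R g x + b *\<^sub>R g y) \<le> a * f (g x) + b * f (g y)"
    using assms(2) ab unfolding convex_on_def by blast
  then show "f (g (a *\<^sub>R x + b *\<^sub>R y)) \<le> a * f (g x) + b * f (g y)"
    using assms(1) by (simp add: linear_add linear_scale)
qed (fact assms(4))

lemma convex_on_sum_functions:
  assumes "finite I" "convex S" "\<And>i. i \<in> I \<Longrightarrow> convex_on S (f i)"
  shows "convex_on S (\<lambda>x. \<Sum>i\<in>I. f i x)"
  using assms by (induction I rule: finite_induct) (auto simp: convex_on_const)

lemma convex_on_linear_power2:
  fixes g :: "'a::real_vector \<Rightarrow> real"
  assumes "linear g"
  shows "convex_on UNIV (\<lambda>x. (g x)\<^sup>2)"
  using convex_on_compose_linear[OF assms convex_power2] by simp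

lemma convex_on_power2_nonneg:
  fixes f :: "'a::real_vector \<Rightarrow> real"
  assumes "convex_on S f" "\<And>x. x \<in> S \<Longrightarrow> 0 \<le> f x"
  shows "convex_on S (\<lambda>x. (f x)\<^sup>2)"
  unfolding convex_on_def
proof (intro conjI ballI allI impI)
  show "convex S" using assms(1) by (rule convex_on_imp_convex)
  fix x y and a b :: real
  assume xy: "x \<in> S" "y \<in> S" and ab: "0 \<le> a" "0 \<le> b" "a + b = 1"
  have "(f (a *\<^sub>R x + b *\<^sub>R y))\<^sup>2 \<le> (a * f x + b * f y)\<^sup>2"
    using assms xy ab \<open>convex S\<close> by (intro power_mono) (auto simp: convex_on_def convex_def)
  also have "\<dots> \<le> a * (f x)\<^sup>2 + b * (f y)\<^sup>2"
    using convex_power2 ab unfolding convex_on_def by (simp add: power2_eq_square)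
  finally show "(f (a *\<^sub>R x + b *\<^sub>R y))\<^sup>2 \<le> a * (f x)\<^sup>2 + b * (f y)\<^sup>2" .
qed

lemma convex_fst_pos: "convex {p :: real \<times> 'a::real_vector. 0 < fst p}"
proof -
  have "{p :: real \<times> 'a. 0 < fst p} = fst -` {0<..}" by auto
  then show ?thesis by (simp add: convex_linear_vimage linear_fst)
qed

lemma open_fst_pos: "open {w :: real \<times> 'a::topological_space. 0 < fst w}"
  by (intro open_Collect_less continuous_intros)

lemma convex_on_perspective:
  fixes \<phi> :: "real \<Rightarrow> real"
  assumes "convex_on UNIV \<phi>"
  shows "convex_on {p. 0 < fst p} (\<lambda>p. fst p * \<phi> (snd p / fst p))"
  unfolding convex_on_def
proof (intro conjI ballI allI impI)
  show "convex {p :: real \<times> real. 0 < fst p}"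
    by (rule convex_fst_pos)
  fix x y :: "real \<times> real" and a b :: real
  assume xy: "x \<in> {p. 0 < fst p}" "y \<in> {p. 0 < fst p}" and ab: "0 \<le> a" "0 \<le> b" "a + b = 1"
  obtain l1 t1 l2 t2 where x: "x = (l1, t1)" and y: "y = (l2, t2)" by fastforce
  define l where "l = a * l1 + b * l2"
  have l1: "0 < l1" and l2: "0 < l2" using xy by (auto simp: x y)
  have l: "0 < l"
    using l1 l2 ab unfolding l_def by (cases "a = 0") (auto intro: add_pos_nonneg)
  have "\<phi> ((a * t1 + b * t2) / l) = \<phi> ((a * l1 / l) * (t1 / l1) + (b * l2 / l) * (t2 / l2))"
    using l1 l2 by (simp add: add_divide_distrib)
  also have "\<dots> \<le> (a * l1 / l) * \<phi> (t1 / l1) + (b * l2 / l) * \<phi> (t2 / l2)"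
  proof -
    have "0 \<le> a * l1 / l" "0 \<le> b * l2 / l" "a * l1 / l + b * l2 / l = 1"
      using ab l1 l2 l by (simp_all add: l_def add_divide_distrib[symmetric])
    then have "\<phi> ((a * l1 / l) *\<^sub>R (t1 / l1) + (b * l2 / l) *\<^sub>R (t2 / l2))
        \<le> (a * l1 / l) * \<phi> (t1 / l1) + (b * l2 / l) * \<phi> (t2 / l2)"
      using assms unfolding convex_on_def by blast
    then show ?thesis by (simp only: real_scaleR_def)
  qed
  finally show "fst (a *\<^sub>R x + b *\<^sub>R y) * \<phi> (snd (a *\<^sub>R x + b *\<^sub>R y) / fst (a *\<^sub>R x + b *\<^sub>R y))
      \<le> a * (fst x * \<phi> (snd x / fst x)) + b * (fst y * \<phi> (snd y / fst y))"
    using l by (simp add: x y l_def[symmetric] field_simps)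
qed

text \<open>Restricting f to the line through z and w reduces this to the one-dimensional
  tangent inequality.\<close>

lemma convex_on_imp_above_tangent_plane:
  fixes f :: "'a::real_normed_vector \<Rightarrow> real"
  assumes convex: "convex_on S f" and "open S" "z \<in> S" "w \<in> S"
    and deriv: "(f has_derivative f') (at z)"
  shows "f z + f' (w - z) \<le> f w"
proof -
  define \<gamma> where "\<gamma> s = z + s *\<^sub>R (w - z)" for s :: real
  define A where "A = \<gamma> -` S"
  have \<gamma>_affine: "\<gamma> (a * x + b * y) = a *\<^sub>R \<gamma> x + b *\<^sub>R \<gamma> y" if "a + b = 1" for a b x y
  proof -
    have "\<gamma> (a * x + b * y) = (a + b) *\<^sub>R z + (a * x + b * y) *\<^sub>R (w - z)"
      using that by (simp add: \<gamma>_def)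
    then show ?thesis by (simp add: \<gamma>_def algebra_simps)
  qed
  have "convex A"
    using convex_on_imp_convex[OF convex] by (simp add: A_def convex_def \<gamma>_affine)
  have "open A"
    unfolding A_def \<gamma>_def by (intro open_vimage \<open>open S\<close> continuous_intros)
  have "convex_on A (\<lambda>s. f (\<gamma> s))"
    using convex \<open>convex A\<close> by (simp add: A_def convex_on_def \<gamma>_affine)
  moreover have "((\<lambda>s. f (\<gamma> s)) has_real_derivative f' (w - z)) (at 0 within A)"
  proof -
    have "(\<gamma> has_derivative (\<lambda>s. s *\<^sub>R (w - z))) (at 0)"
      unfolding \<gamma>_def by (auto intro!: derivative_eq_intros)
    moreover have "(f has_derivative f') (at (\<gamma> 0))"
      using deriv by (simp add: \<gamma>_def)
    ultimately have "((\<lambda>s. f (\<gamma> s)) has_derivative (\<lambda>s. f' (s *\<^sub>R (w - z)))) (at 0)"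
      by (rule diff_chain_at[unfolded o_def])
    moreover have "(\<lambda>s. f' (s *\<^sub>R (w - z))) = (*) (f' (w - z))"
      using linear_scale[OF has_derivative_linear[OF deriv]] by (auto simp: mult.commute)
    ultimately show ?thesis
      unfolding has_field_derivative_def by (metis has_derivative_at_withinI)
  qed
  ultimately have "f (\<gamma> 1) - f (\<gamma> 0) \<ge> f' (w - z) * (1 - 0)"
    using \<open>open A\<close> \<open>convex A\<close> assms(3,4)
    by (intro convex_on_imp_above_tangent convex_connected) (auto simp: A_def \<gamma>_def interior_open)
  then show ?thesis by (simp add: \<gamma>_def)
qed

lemma convex_on_diff_affine:
  assumes "convex_on S f" "linear D"
  shows "convex_on S (\<lambda>x. f x - c - D (x - z))"
  unfolding convex_on_def
proof (intro conjI ballI allI impI)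
  show "convex S" using assms(1) by (rule convex_on_imp_convex)
  fix x y and a b :: real
  assume "x \<in> S" "y \<in> S" and ab: "0 \<le> a" "0 \<le> b" "a + b = 1"
  then have "f (a *\<^sub>R x + b *\<^sub>R y) \<le> a * f x + b * f y"
    using assms(1) unfolding convex_on_def by blast
  moreover have "D (a *\<^sub>R x + b *\<^sub>R y - z) = a * D (x - z) + b * D (y - z)"
  proof -
    have "a *\<^sub>R x + b *\<^sub>R y - z = a *\<^sub>R (x - z) + b *\<^sub>R (y - z)"
      using ab(3) by (simp add: algebra_simps flip: scaleR_add_left)
    then show ?thesis using assms(2) by (simp add: linear_add linear_scale)
  qed
  moreover have "a * c + b * c = c"
    using ab(3) by (simp flip: distrib_right)
  ultimately show "f (a *\<^sub>R x + b *\<^sub>R y) - c - D (a *\<^sub>R x + b *\<^sub>R y - z)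
      \<le> a * (f x - c - D (x - z)) + b * (f y - c - D (y - z))"
    by (simp add: algebra_simps)
qed

text \<open>For fixed u this is the perspective (l, t) \<mapsto> l \<phi>(t/l) of \<phi>(s) = e^{-us}.\<close>

definition scaled_decay :: "real \<Rightarrow> real \<times> real \<times> real \<Rightarrow> real" where
  "scaled_decay u w = fst w * exp (- (u * snd (snd w) / fst w))"

text \<open>The constraint k \<ge> 0 keeps k + l e^{-ut/l} nonnegative, which the convexity of h_plus
  needs.\<close>

definition worker_domain :: "(real \<times> real \<times> real) set" where
  "worker_domain = {w. 0 < fst w \<and> 0 \<le> fst (snd w)}"

lemma h_plus_eq_scaled_decay: "h_plus u w = (fst (snd w) + scaled_decay u w)\<^sup>2 / 2"
  by (simp add: h_plus_def scaled_decay_def split: prod.split)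

lemma h_minus_eq_scaled_decay: "h_minus u w = ((fst (snd w))\<^sup>2 + (scaled_decay u w)\<^sup>2) / 2"
proof -
  have "exp (- (2 * u * t / l)) = (exp (- (u * t / l)))\<^sup>2" for u t l :: real
    by (simp add: power2_eq_square flip: exp_add)
  then show ?thesis
    by (simp add: h_minus_def scaled_decay_def power_mult_distrib split: prod.split)
qed

lemma scaled_decay_pos: "0 < fst w \<Longrightarrow> 0 < scaled_decay u w"
  by (simp add: scaled_decay_def)

lemma convex_on_scaled_decay: "convex_on {w. 0 < fst w} (scaled_decay u)"
proof -
  have "convex_on UNIV (\<lambda>s. exp (- (u * s)))"
    by (intro convex_on_compose_linear[OF _ exp_convex]) (auto intro: linearI simp: algebra_simps)
  then have perspective: "convex_on {p. 0 < fst p} (\<lambda>p. fst p * exp (- (u * (snd p / fst p))))"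
    by (rule convex_on_perspective)
  have "linear (\<lambda>w :: real \<times> real \<times> real. (fst w, snd (snd w)))"
    by (intro linearI) auto
  from convex_on_compose_linear[OF this perspective, of "{w. 0 < fst w}"] show ?thesis
    by (simp add: scaled_decay_def[abs_def] convex_fst_pos image_subset_iff)
qed

lemma g_plus_eq: "g_plus w = ((fst (snd w))\<^sup>2 + (fst w)\<^sup>2) / 2"
  by (simp add: g_plus_def split: prod.split)

lemma g_minus_eq: "g_minus w = (fst (snd w) + fst w)\<^sup>2 / 2"
  by (simp add: g_minus_def split: prod.split)

lemma convex_on_g_plus: "convex_on UNIV g_plus"
proof -
  have "convex_on UNIV (\<lambda>w :: real \<times> real \<times> real. (fst (snd w))\<^sup>2 + (fst w)\<^sup>2)"
    by (intro convex_on_add convex_on_linear_power2 linearI) auto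
  then show ?thesis
    unfolding g_plus_eq[abs_def] by (rule convex_on_cdiv[rotated]) simp
qed

lemma convex_on_g_minus: "convex_on UNIV g_minus"
proof -
  have "convex_on UNIV (\<lambda>w :: real \<times> real \<times> real. (fst (snd w) + fst w)\<^sup>2)"
    by (intro convex_on_linear_power2 linearI) (auto simp: algebra_simps)
  then show ?thesis
    unfolding g_minus_eq[abs_def] by (rule convex_on_cdiv[rotated]) simp
qed

lemma convex_on_h_minus: "convex_on {w. 0 < fst w} (h_minus u)"
proof -
  have "convex_on {w. 0 < fst w} (\<lambda>w :: real \<times> real \<times> real. (fst (snd w))\<^sup>2)"
    by (intro convex_on_subset[OF convex_on_linear_power2] linearI) (auto simp: convex_fst_pos)
  moreover have "convex_on {w. 0 < fst w} (\<lambda>w. (scaled_decay u w)\<^sup>2)"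
    by (intro convex_on_power2_nonneg convex_on_scaled_decay) (simp add: scaled_decay_pos less_imp_le)
  ultimately show ?thesis
    unfolding h_minus_eq_scaled_decay[abs_def] by (intro convex_on_cdiv convex_on_add) auto
qed

lemma convex_worker_domain: "convex worker_domain"
proof -
  have eq: "worker_domain = fst -` {0<..} \<inter> (\<lambda>w. fst (snd w)) -` {0..}"
    by (auto simp: worker_domain_def)
  show ?thesis
    unfolding eq by (intro convex_Int convex_linear_vimage linear_fst linearI) auto
qed

lemma convex_on_h_plus: "convex_on worker_domain (h_plus u)"
proof -
  have "convex_on worker_domain (\<lambda>w. fst (snd w) + scaled_decay u w)"
  proof (intro convex_on_add)
    show "convex_on worker_domain (\<lambda>w. fst (snd w))"
      using convex_worker_domain by (simp add: convex_on_def)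
    show "convex_on worker_domain (scaled_decay u)"
      by (rule convex_on_subset[OF convex_on_scaled_decay _ convex_worker_domain])
        (auto simp: worker_domain_def)
  qed
  then have "convex_on worker_domain (\<lambda>w. (fst (snd w) + scaled_decay u w)\<^sup>2)"
    by (rule convex_on_power2_nonneg) (simp add: worker_domain_def scaled_decay_pos add_nonneg_nonneg less_imp_le)
  then show ?thesis
    unfolding h_plus_eq_scaled_decay[abs_def] by (rule convex_on_cdiv[rotated]) simp
qed

lemma g_minus_differentiable: "g_minus differentiable at z"
  unfolding g_minus_eq[abs_def] differentiable_def by (rule exI) (rule derivative_intros | simp)+

lemma h_minus_differentiable: "0 < fst z \<Longrightarrow> h_minus u differentiable at z"
  unfolding h_minus_eq_scaled_decay[abs_def] scaled_decay_def differentiable_def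
  by (rule exI) (rule derivative_intros | simp)+

lemma g_tilde_lower_bound: "- (fst w * fst (snd w)) \<le> g_tilde w z"
proof -
  have "g_minus z + frechet_derivative g_minus (at z) (w - z) \<le> g_minus w"
    using g_minus_differentiable[unfolded frechet_derivative_works]
    by (rule convex_on_imp_above_tangent_plane[OF convex_on_g_minus open_UNIV UNIV_I UNIV_I])
  moreover have "g_plus w - g_minus w = - (fst w * fst (snd w))"
    by (simp add: g_plus_eq g_minus_eq power2_eq_square algebra_simps)
  ultimately show ?thesis
    unfolding g_tilde_def by linarith
qed

lemma h_tilde_lower_bound:
  assumes "0 < fst w" "0 < fst z"
  shows "fst (snd w) * scaled_decay u w \<le> h_tilde u w z"
proof -
  have "h_minus u z + frechet_derivative (h_minus u) (at z) (w - z) \<le> h_minus u w"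
    using assms h_minus_differentiable[where u = u, OF assms(2), unfolded frechet_derivative_works]
    by (intro convex_on_imp_above_tangent_plane[OF convex_on_h_minus open_fst_pos]) auto
  moreover have "h_plus u w - h_minus u w = fst (snd w) * scaled_decay u w"
    by (simp add: h_plus_eq_scaled_decay h_minus_eq_scaled_decay power2_eq_square algebra_simps)
  ultimately show ?thesis
    unfolding h_tilde_def by linarith
qed

lemma convex_on_g_tilde: "convex_on UNIV (\<lambda>w. g_tilde w z)"
  unfolding g_tilde_def
  by (rule convex_on_diff_affine[OF convex_on_g_plus linear_frechet_derivative[OF g_minus_differentiable]])

lemma convex_on_h_tilde: "0 < fst z \<Longrightarrow> convex_on worker_domain (\<lambda>w. h_tilde u w z)"
  unfolding h_tilde_def
  by (rule convex_on_diff_affine[OF convex_on_h_plus linear_frechet_derivative[OF h_minus_differentiable]])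

lemma worker_majorant_lower_bound:
  assumes "0 < l" "0 < fst z"
  shows "- (k * l * (1 - exp (- (u / l) * (t - a * l))))
    \<le> g_tilde (l, k, t) z + exp (u * a) * h_tilde u (l, k, t) z"
proof -
  have "exp (u * a) * scaled_decay u (l, k, t) = l * exp (- (u / l) * (t - a * l))"
    using assms(1) by (simp add: scaled_decay_def field_simps flip: exp_add)
  moreover have "exp (u * a) * (k * scaled_decay u (l, k, t)) \<le> exp (u * a) * h_tilde u (l, k, t) z"
    using h_tilde_lower_bound[of "(l, k, t)" z u] assms by simp
  moreover have "- (l * k) \<le> g_tilde (l, k, t) z"
    using g_tilde_lower_bound[of "(l, k, t)" z] by simp
  ultimately show ?thesis
    by (simp add: algebra_simps)
qed

lemma convex_on_worker_majorant:
  assumes "0 < fst z" "0 \<le> c"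
  shows "convex_on worker_domain (\<lambda>w. g_tilde w z + c * h_tilde u w z)"
  using assms convex_worker_domain
  by (intro convex_on_add convex_on_cmul convex_on_h_tilde convex_on_subset[OF convex_on_g_tilde]) auto

definition worker :: "'n \<Rightarrow> (real^'n) \<times> (real^'n) \<times> real \<Rightarrow> real \<times> real \<times> real" where
  "worker n w = (fst w $ n, fst (snd w) $ n, snd (snd w))"

lemma linear_worker: "linear (worker n)"
  by (intro linearI) (auto simp: worker_def)

lemma worker_in_domain: "w \<in> admissible \<Longrightarrow> worker n w \<in> worker_domain"
  by (auto simp: admissible_def worker_def worker_domain_def)

lemma q_tilde_worker:
  "q_tilde L u a w z = L + (\<Sum>n\<in>UNIV. g_tilde (worker n w) (worker n z)
     + exp (u$n * a$n) * h_tilde (u$n) (worker n w) (worker n z))"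
  by (simp add: q_tilde_def worker_def split: prod.split)

lemma convex_admissible: "convex admissible"
proof -
  have eq: "admissible = (\<Inter>n. (\<lambda>w. (fst w $ n, fst (snd w) $ n)) -` ({0<..} \<times> {0..1}))"
    by (auto simp: admissible_def)
  show ?thesis
    unfolding eq by (intro convex_INT convex_linear_vimage convex_Times linearI ballI) auto
qed

lemma q_tilde_lower_bound:
  assumes "w \<in> admissible" "z \<in> admissible"
  shows "L - expected_X u a (fst w) (fst (snd w)) (snd (snd w)) \<le> q_tilde L u a w z"
proof -
  have pos: "0 < fst w $ n" "0 < fst (worker n z)" for n
    using assms by (auto simp: admissible_def worker_def)
  have "L - expected_X u a (fst w) (fst (snd w)) (snd (snd w))
      = L + (\<Sum>n\<in>UNIV. - (fst (snd w) $ n * fst w $ n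
          * (1 - exp (- (u$n / fst w $ n) * (snd (snd w) - a$n * fst w $ n)))))"
    by (simp add: expected_X_def sum_negf)
  also have "\<dots> \<le> q_tilde L u a w z"
    unfolding q_tilde_worker worker_def[of _ w]
    using pos by (intro add_left_mono sum_mono worker_majorant_lower_bound)
  finally show ?thesis .
qed

lemma convex_on_q_tilde:
  assumes "z \<in> admissible"
  shows "convex_on admissible (\<lambda>w. q_tilde L u a w z)"
proof -
  have z_pos: "0 < fst (worker n z)" for n
    using assms by (auto simp: admissible_def worker_def)
  have "convex_on admissible (\<lambda>w. g_tilde (worker n w) (worker n z)
      + exp (u$n * a$n) * h_tilde (u$n) (worker n w) (worker n z))" for n
    using convex_on_compose_linear[OF linear_worker[of n]
        convex_on_worker_majorant[OF z_pos[of n] exp_ge_zero[of "u$n * a$n"], of "u$n"],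
        where S = admissible]
    by (simp add: image_subset_iff worker_in_domain convex_admissible)
  then have "convex_on admissible (\<lambda>w. \<Sum>n\<in>UNIV. g_tilde (worker n w) (worker n z)
      + exp (u$n * a$n) * h_tilde (u$n) (worker n w) (worker n z))"
    by (intro convex_on_sum_functions convex_admissible) auto
  then show ?thesis
    unfolding q_tilde_worker
    by (rule convex_on_add[rotated]) (simp add: convex_on_const convex_admissible)
qed

theorem lemma2:
  fixes L :: real and u a :: "real^'n"
  assumes "L > 0" and "\<forall>n. u$n > 0" and "\<forall>n. a$n > 0"
  shows "(\<forall>w\<in>admissible. \<forall>z\<in>admissible.
            L - expected_X u a (fst w) (fst (snd w)) (snd (snd w)) \<le> q_tilde L u a w z)
       \<and> (\<forall>z\<in>admissible. convex_on admissible (\<lambda>w. q_tilde L u a w z))"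
  by (simp add: q_tilde_lower_bound convex_on_q_tilde)

end
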